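(* For $n\ge1$, $\left|\Pi_n\wr C_2(1^12^2,1^22^1)\right|=2^n+2(B(n)-1)$, where $B(n)$ is the $n$th Bell number.
   Context: For $n\ge0$ let $[n]=\{1,\dots,n\}$. A $2$-colored set partition of $[n]$ is a set partition of $[n]$ together with an assignment of a color from $\{1,2\}$ to each element; $\Pi_n\wr C_2$ is the set of these. For a set $S$ of patterns, $\Pi_n\wr C_2(S)$ is the set of such colored partitions avoiding every pattern in $S$ in the pattern sense. For the patterns used here: $\sigma$ contains $1^12^2$ iff there are $i<j$ in different blocks with $i$ colored $1$ and $j$ colored $2$; $\sigma$ contains $1^22^1$ iff there are $i<j$ in different blocks with $i$ colored $2$ and $j$ colored $1$. $B(n)$ is the number of set partitions of $[n]$. *)

theory Defs
  imports "HOL-Library.Disjoint_Sets" "HOL-Library.FuncSet"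
begin

definition set_partitions :: "nat \<Rightarrow> nat set set set" where
  "set_partitions n = {P. partition_on {1..n} P}"

definition Bell :: "nat \<Rightarrow> nat" where
  "Bell n = card (set_partitions n)"

definition colored_partitions :: "nat \<Rightarrow> (nat set set \<times> (nat \<Rightarrow> nat)) set" where
  "colored_partitions n =
     {(P, c). partition_on {1..n} P \<and> c \<in> {1..n} \<rightarrow>\<^sub>E {1, 2}}"

definition diff_blocks :: "nat set set \<Rightarrow> nat \<Rightarrow> nat \<Rightarrow> bool" where
  "diff_blocks P i j \<longleftrightarrow> \<not> (\<exists>B\<in>P. i \<in> B \<and> j \<in> B)"

text \<open>Containment of the pattern with colours a (on the smaller element) and b (on the larger)
  in different blocks: pattern 1^a 2^b.\<close>
definition contains_pat :: "nat \<Rightarrow> nat \<Rightarrow> nat \<Rightarrow> nat set set \<times> (nat \<Rightarrow> nat) \<Rightarrow> bool" where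
  "contains_pat n a b \<sigma> \<longleftrightarrow>
     (\<exists>i j. 1 \<le> i \<and> i < j \<and> j \<le> n \<and> diff_blocks (fst \<sigma>) i j \<and> snd \<sigma> i = a \<and> snd \<sigma> j = b)"

abbreviation contains_1_1_2_2 where "contains_1_1_2_2 n \<equiv> contains_pat n 1 2"
abbreviation contains_1_2_2_1 where "contains_1_2_2_1 n \<equiv> contains_pat n 2 1"

end

theory Submission
  imports Defs
begin

text \<open>A colouring avoids both patterns exactly when any two elements of different colours
  share a block. So a monochromatic colouring may come with any partition, while a colouring
  using both colours forces the one-block partition: every element shares a block with an
  element of the other colour, and those two share a block with each other. This gives
  \<open>2 B(n)\<close> monochromatic objects plus \<open>2^n - 2\<close> bicoloured ones.\<close>

lemma partition_on_eq_single_block: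
  assumes P: "partition_on A P" and xy: "\<not> diff_blocks P x y"
    and cover: "\<And>z. z \<in> A \<Longrightarrow> \<not> diff_blocks P x z \<or> \<not> diff_blocks P y z"
  shows "P = {A}"
proof -
  obtain B where B: "B \<in> P" "x \<in> B" "y \<in> B" using xy unfolding diff_blocks_def by blast
  have same_block: "C = D" if "C \<in> P" "D \<in> P" "a \<in> C" "a \<in> D" for C D a
    using partition_onD2[OF P] that unfolding disjoint_def by blast
  have "A \<subseteq> B"
  proof
    fix z assume "z \<in> A"
    with cover obtain C where C: "C \<in> P" "z \<in> C" "x \<in> C \<or> y \<in> C"
      unfolding diff_blocks_def by blast
    with B have "C = B" using same_block by blast
    with C show "z \<in> B" by simp
  qed
  moreover have "B \<subseteq> A" using partition_onD1[OF P] B by blast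
  ultimately have "B = A" by blast
  have "C = B" if "C \<in> P" for C
  proof -
    obtain a where "a \<in> C" using partition_onD3[OF P] \<open>C \<in> P\<close> by fastforce
    moreover have "a \<in> B" using calculation partition_onD1[OF P] \<open>C \<in> P\<close> \<open>B = A\<close> by blast
    ultimately show ?thesis using same_block \<open>C \<in> P\<close> B(1) by blast
  qed
  with B(1) \<open>B = A\<close> show ?thesis by blast
qed

lemma contains_pat_iff_bicoloured_pair:
  assumes "c \<in> {1..n} \<rightarrow>\<^sub>E {1, 2}"
  shows "(contains_1_1_2_2 n (P, c) \<or> contains_1_2_2_1 n (P, c)) \<longleftrightarrow>
         (\<exists>i\<in>{1..n}. \<exists>j\<in>{1..n}. c i \<noteq> c j \<and> diff_blocks P i j)"
proof
  assume "contains_1_1_2_2 n (P, c) \<or> contains_1_2_2_1 n (P, c)"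
  then show "\<exists>i\<in>{1..n}. \<exists>j\<in>{1..n}. c i \<noteq> c j \<and> diff_blocks P i j"
    unfolding contains_pat_def by force
next
  assume "\<exists>i\<in>{1..n}. \<exists>j\<in>{1..n}. c i \<noteq> c j \<and> diff_blocks P i j"
  then obtain i j where ij: "i \<in> {1..n}" "j \<in> {1..n}" "c i \<noteq> c j" "i < j"
    and "diff_blocks P i j"
    by (metis diff_blocks_def linorder_neq_iff)
  then have "contains_pat n (c i) (c j) (P, c)"
    unfolding contains_pat_def by auto
  moreover have "c i \<in> {1, 2}" "c j \<in> {1, 2}" using assms ij by auto
  ultimately show "contains_1_1_2_2 n (P, c) \<or> contains_1_2_2_1 n (P, c)"
    using ij(3) by auto
qed

lemma PiE_two_values_nonconstant:
  assumes c: "c \<in> A \<rightarrow>\<^sub>E {a, b}"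
    and nonconst: "c \<notin> {restrict (\<lambda>_. a) A, restrict (\<lambda>_. b) A}"
  obtains x y where "x \<in> A" "c x = a" "y \<in> A" "c y = b"
proof -
  have "\<exists>x\<in>A. c x = v" if "v \<in> {a, b}" for v
  proof (rule ccontr)
    assume "\<not> (\<exists>x\<in>A. c x = v)"
    then have "c = restrict (\<lambda>_. if v = a then b else a) A"
      using c that by (auto simp: PiE_iff extensional_def fun_eq_iff)
    with nonconst show False by (auto split: if_splits)
  qed
  then show thesis using that by blast
qed

definition monochrome :: "nat \<Rightarrow> nat \<Rightarrow> nat \<Rightarrow> nat" where
  "monochrome n a = restrict (\<lambda>_. a) {1..n}"

lemma avoiding_colored_partitions_eq:
  assumes "n \<ge> 1"
  shows "{\<sigma> \<in> colored_partitions n. \<not> contains_1_1_2_2 n \<sigma> \<and> \<not> contains_1_2_2_1 n \<sigma>}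
         = set_partitions n \<times> {monochrome n 1, monochrome n 2}
           \<union> {{{1..n}}} \<times> (({1..n} \<rightarrow>\<^sub>E {1, 2}) - {monochrome n 1, monochrome n 2})"
    (is "?S = ?R")
proof (intro equalityI subsetI)
  fix \<sigma> assume "\<sigma> \<in> ?S"
  then obtain P c where \<sigma>: "\<sigma> = (P, c)" and P: "partition_on {1..n} P"
    and c: "c \<in> {1..n} \<rightarrow>\<^sub>E {1, 2}"
    and avoids: "\<not> (contains_1_1_2_2 n (P, c) \<or> contains_1_2_2_1 n (P, c))"
    unfolding colored_partitions_def by (cases \<sigma>) auto
  have same: "\<not> diff_blocks P i j" if "i \<in> {1..n}" "j \<in> {1..n}" "c i \<noteq> c j" for i j
    using avoids that contains_pat_iff_bicoloured_pair[OF c] by blast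
  show "\<sigma> \<in> ?R"
  proof (cases "c \<in> {monochrome n 1, monochrome n 2}")
    case True
    with P show ?thesis unfolding \<sigma> set_partitions_def by blast
  next
    case False
    then obtain x y where x: "x \<in> {1..n}" "c x = 1" and y: "y \<in> {1..n}" "c y = 2"
      using PiE_two_values_nonconstant[OF c] unfolding monochrome_def by blast
    have "P = {{1..n}}"
    proof (rule partition_on_eq_single_block[OF P])
      show "\<not> diff_blocks P x y" using same x y by simp
      fix z assume z: "z \<in> {1..n}"
      with c have "c z = 1 \<or> c z = 2" by auto
      then show "\<not> diff_blocks P x z \<or> \<not> diff_blocks P y z"
        using same[OF x(1) z] same[OF y(1) z] x y by auto
    qed
    with False c show ?thesis unfolding \<sigma> by blast
  qed
next
  fix \<sigma> assume R: "\<sigma> \<in> ?R"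
  then obtain P c where \<sigma>: "\<sigma> = (P, c)" by (cases \<sigma>)
  have single: "partition_on {1..n} {{1..n}}"
    using assms by (intro partition_on_space) auto
  have monochrome_PiE: "monochrome n a \<in> {1..n} \<rightarrow>\<^sub>E {1, 2}" if "a \<in> {1, 2}" for a
    using that unfolding monochrome_def by auto
  have "partition_on {1..n} P \<and> c \<in> {1..n} \<rightarrow>\<^sub>E {1, 2} \<and>
        (\<forall>i\<in>{1..n}. \<forall>j\<in>{1..n}. c i \<noteq> c j \<longrightarrow> \<not> diff_blocks P i j)"
  proof (cases "c \<in> {monochrome n 1, monochrome n 2}")
    case True
    then have "P \<in> set_partitions n" using R unfolding \<sigma> by blast
    moreover have "c i = c j" if "i \<in> {1..n}" "j \<in> {1..n}" for i j
      using True that unfolding monochrome_def by auto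
    ultimately show ?thesis
      using True monochrome_PiE unfolding set_partitions_def by blast
  next
    case False
    with R have "P = {{1..n}}" "c \<in> {1..n} \<rightarrow>\<^sub>E {1, 2}" unfolding \<sigma> by auto
    with single show ?thesis unfolding diff_blocks_def by simp
  qed
  then show "\<sigma> \<in> ?S"
    unfolding \<sigma> colored_partitions_def
    using contains_pat_iff_bicoloured_pair by blast
qed

lemma finite_set_partitions: "finite (set_partitions n)"
  unfolding set_partitions_def by (rule finitely_many_partition_on) simp

lemma Bell_pos:
  assumes "n \<ge> 1"
  shows "Bell n \<ge> 1"
proof -
  have "{{1..n}} \<in> set_partitions n"
    unfolding set_partitions_def using assms by (intro CollectI partition_on_space) auto
  then have "set_partitions n \<noteq> {}" by blast
  then show ?thesis
    unfolding Bell_def using finite_set_partitions by (simp add: Suc_le_eq card_gt_0_iff)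
qed

theorem mainTheorem6:
  fixes n :: nat
  assumes "n \<ge> 1"
  shows "card {\<sigma> \<in> colored_partitions n.
                 \<not> contains_1_1_2_2 n \<sigma> \<and> \<not> contains_1_2_2_1 n \<sigma>}
         = 2 ^ n + 2 * (Bell n - 1)"
proof -
  define F where "F = ({1..n} \<rightarrow>\<^sub>E {1::nat, 2})"
  define M where "M = {monochrome n 1, monochrome n 2}"
  have "monochrome n 1 1 \<noteq> monochrome n 2 1"
    using assms unfolding monochrome_def by simp
  then have card_M: "card M = 2" unfolding M_def by (metis card_2_iff)
  have "M \<subseteq> F" unfolding M_def F_def monochrome_def by auto
  moreover have "finite F" "card F = 2 ^ n"
    unfolding F_def by (simp_all add: finite_PiE card_PiE eval_nat_numeral)
  ultimately have card_bicoloured: "card (F - M) = 2 ^ n - 2"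
    using card_M by (metis card_Diff_subset finite_subset)
  have "card (set_partitions n \<times> M \<union> {{{1..n}}} \<times> (F - M))
        = card (set_partitions n \<times> M) + card ({{{1..n}}} \<times> (F - M))"
    using finite_set_partitions \<open>finite F\<close> unfolding M_def by (intro card_Un_disjoint) auto
  also have "\<dots> = 2 * Bell n + (2 ^ n - 2)"
    using card_M card_bicoloured by (simp add: card_cartesian_product Bell_def)
  also have "\<dots> = 2 ^ n + 2 * (Bell n - 1)"
    using Bell_pos[OF assms] one_less_power[of "2::nat" n] assms by simp
  finally show ?thesis
    using avoiding_colored_partitions_eq[OF assms] unfolding M_def F_def by simp
qed

end
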